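(* Let $M\ge1$ users be located at $(x_m,y_m,0)$, $1\le m\le M$, with $-\frac{D_{\rm L}}{2}\le x_m\le \frac{D_{\rm L}}{2}$ and $-\frac{D_{\rm W}}{2}\le y_m\le\frac{D_{\rm W}}{2}$, and let an antenna be placed at $(x,0,d)$, $d>0$. With $\eta>0,\sigma^2>0$ define $R_m^{\rm OMA}=\frac{1}{M}\log\left(1+\frac{\eta P_m}{\sigma^2((x-x_m)^2+y_m^2+d^2)}\right)$. For a target rate $R>0$ consider $$\min_{P_1,\dots,P_M,\ x}\ \sum_{m=1}^M P_m\quad\text{s.t.}\quad R_m^{\rm OMA}\ge R\ (1\le m\le M),\quad P_m\ge0,\quad -\frac{D_{\rm L}}{2}\le x\le\frac{D_{\rm L}}{2}.$$ Then the optimal antenna location is $x^*=\frac{1}{M}\sum_{m=1}^M x_m$ and the optimal powers are $P_m^*=\epsilon(x^*-x_m)^2+\tau_m$, $1\le m\le M$, where $\epsilon=\frac{\sigma^2}{\eta}(e^{MR}-1)$ and $\tau_m=\epsilon(y_m^2+d^2)$.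
   Context: Pinching-antenna system with a single antenna at $(x,0,d)$ on a waveguide at height $d$; users served by TDMA over $M$ slots; $\eta=\frac{c^2}{16\pi^2f_c^2}$, $\sigma^2$ is the noise power, $\log$ is the natural logarithm. *)

theory Defs
  imports Complex_Main
begin

definition R_OMA :: "nat \<Rightarrow> real \<Rightarrow> real \<Rightarrow> real \<Rightarrow> real \<Rightarrow> real \<Rightarrow> real \<Rightarrow> real \<Rightarrow> real" where
  "R_OMA M eta sigma2 Pm x xm ym d =
     (1 / real M) * ln (1 + eta * Pm / (sigma2 * ((x - xm)^2 + ym^2 + d^2)))"

definition feasible :: "nat \<Rightarrow> real \<Rightarrow> real \<Rightarrow> real \<Rightarrow> real \<Rightarrow> real
     \<Rightarrow> (nat \<Rightarrow> real) \<Rightarrow> (nat \<Rightarrow> real) \<Rightarrow> (nat \<Rightarrow> real) \<Rightarrow> real \<Rightarrow> bool" where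
  "feasible M eta sigma2 d DL R xs ys P x \<longleftrightarrow>
     (\<forall>m\<in>{1..M}. R_OMA M eta sigma2 (P m) x (xs m) (ys m) d \<ge> R \<and> P m \<ge> 0)
     \<and> - DL / 2 \<le> x \<and> x \<le> DL / 2"

end

theory Submission
  imports Defs
begin

text \<open>The rate constraint of user \<open>m\<close> is equivalent to the power bound
  \<open>P\<^sub>m \<ge> \<epsilon> ((x - x\<^sub>m)\<^sup>2 + y\<^sub>m\<^sup>2 + d\<^sup>2)\<close>. Summing these bounds, the total power is at least
  \<open>\<epsilon> \<Sum>\<^sub>m ((x - x\<^sub>m)\<^sup>2 + y\<^sub>m\<^sup>2 + d\<^sup>2)\<close>, and the bias-variance decomposition rewrites this as
  \<open>\<Sum>\<^sub>m P\<^sub>m\<^sup>* + \<epsilon> M (x - x\<^sup>*)\<^sup>2\<close>. Hence \<open>(P\<^sup>*, x\<^sup>*)\<close> is optimal, and at any other optimum the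
  extra term vanishes and every power bound is tight.\<close>

definition min_power :: "nat \<Rightarrow> real \<Rightarrow> real \<Rightarrow> real \<Rightarrow> real \<Rightarrow> real \<Rightarrow> real \<Rightarrow> real \<Rightarrow> real" where
  "min_power M eta sigma2 R x xm ym d =
     sigma2 / eta * (exp (real M * R) - 1) * ((x - xm)^2 + ym^2 + d^2)"

lemma R_OMA_ge_iff_min_power_le:
  assumes "M \<ge> 1" "eta > 0" "sigma2 > 0" "d > 0" "P \<ge> 0"
  shows "R \<le> R_OMA M eta sigma2 P x xm ym d \<longleftrightarrow> min_power M eta sigma2 R x xm ym d \<le> P"
proof -
  define q where "q = (x - xm)^2 + ym^2 + d^2"
  have "q > 0" unfolding q_def using \<open>d > 0\<close> by (simp add: add_nonneg_pos)
  have "eta * P / (sigma2 * q) \<ge> 0"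
    using assms \<open>q > 0\<close> by simp
  have "R \<le> R_OMA M eta sigma2 P x xm ym d \<longleftrightarrow> real M * R \<le> ln (1 + eta * P / (sigma2 * q))"
    using \<open>M \<ge> 1\<close> by (simp add: R_OMA_def q_def field_simps)
  also have "\<dots> \<longleftrightarrow> exp (real M * R) - 1 \<le> eta * P / (sigma2 * q)"
    using \<open>eta * P / (sigma2 * q) \<ge> 0\<close> by (subst ln_ge_iff) auto
  also have "\<dots> \<longleftrightarrow> (exp (real M * R) - 1) * (sigma2 * q) / eta \<le> P"
    using assms \<open>q > 0\<close> by (simp add: pos_le_divide_eq pos_divide_le_eq mult.commute)
  also have "(exp (real M * R) - 1) * (sigma2 * q) / eta = min_power M eta sigma2 R x xm ym d"
    by (simp add: min_power_def q_def)
  finally show ?thesis .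
qed

lemma feasible_iff_min_power_le:
  assumes "M \<ge> 1" "eta > 0" "sigma2 > 0" "d > 0" "R \<ge> 0"
  shows "feasible M eta sigma2 d DL R xs ys P x \<longleftrightarrow>
    (\<forall>m\<in>{1..M}. min_power M eta sigma2 R x (xs m) (ys m) d \<le> P m) \<and> - DL / 2 \<le> x \<and> x \<le> DL / 2"
proof -
  have "min_power M eta sigma2 R x (xs m) (ys m) d \<ge> 0" for m
    using assms by (simp add: min_power_def)
  then show ?thesis
    using R_OMA_ge_iff_min_power_le[OF assms(1-4)] unfolding feasible_def
    by (meson order_trans)
qed

lemma sum_power2_diff_mean:
  fixes f :: "'a \<Rightarrow> real" and A :: "'a set" and x \<mu> :: real
  defines "\<mu> \<equiv> sum f A / card A"
  shows "(\<Sum>a\<in>A. (x - f a)^2) = (\<Sum>a\<in>A. (\<mu> - f a)^2) + card A * (x - \<mu>)^2"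
proof -
  \<comment> \<open>also when \<open>card A = 0\<close>: then \<open>sum f A = 0\<close>, whether \<open>A\<close> is empty or infinite\<close>
  have sum_eq: "sum f A = card A * \<mu>"
    unfolding \<mu>_def by (cases "card A = 0") (auto simp: card_eq_0_iff)
  have "(\<Sum>a\<in>A. (x - f a)^2) =
      (\<Sum>a\<in>A. (\<mu> - f a)^2 + (x - \<mu>)^2 + 2 * (x - \<mu>) * (\<mu> - f a))"
    by (rule sum.cong) (auto simp: power2_eq_square algebra_simps)
  also have "\<dots> = (\<Sum>a\<in>A. (\<mu> - f a)^2) + card A * (x - \<mu>)^2
      + 2 * (x - \<mu>) * (card A * \<mu> - sum f A)"
    by (simp add: sum.distrib sum_subtractf sum_distrib_left[symmetric])
  finally show ?thesis
    using sum_eq by simp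
qed

lemma mean_between_bounds:
  fixes f :: "'a \<Rightarrow> real"
  assumes "finite A" "A \<noteq> {}" "\<forall>a\<in>A. lo \<le> f a \<and> f a \<le> hi"
  shows "lo \<le> sum f A / card A \<and> sum f A / card A \<le> hi"
proof -
  have "card A * lo \<le> sum f A" "sum f A \<le> card A * hi"
    using sum_mono[of A "\<lambda>_. lo" f] sum_mono[of A f "\<lambda>_. hi"] assms(3) by auto
  moreover have "card A > 0"
    using assms(1,2) by (simp add: card_gt_0_iff)
  ultimately show ?thesis
    by (simp add: field_simps)
qed

lemma sum_min_power_eq:
  fixes M :: nat and eta sigma2 R x d xstar eps :: real and xs ys :: "nat \<Rightarrow> real"
  defines "xstar \<equiv> (\<Sum>m=1..M. xs m) / M"
    and "eps \<equiv> sigma2 / eta * (exp (real M * R) - 1)"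
  shows "(\<Sum>m=1..M. min_power M eta sigma2 R x (xs m) (ys m) d)
    = (\<Sum>m=1..M. min_power M eta sigma2 R xstar (xs m) (ys m) d) + eps * M * (x - xstar)^2"
proof -
  have "min_power M eta sigma2 R x (xs m) (ys m) d = eps * ((x - xs m)^2 + ((ys m)^2 + d^2))"
    for x m by (simp add: min_power_def eps_def)
  then have "(\<Sum>m=1..M. min_power M eta sigma2 R x (xs m) (ys m) d)
      = eps * ((\<Sum>m=1..M. (x - xs m)^2) + (\<Sum>m=1..M. (ys m)^2 + d^2))" for x
    by (simp only: sum.distrib[symmetric] sum_distrib_left)
  then show ?thesis
    using sum_power2_diff_mean[of x xs "{1..M}"] unfolding xstar_def
    by (simp add: algebra_simps)
qed

lemma feasible_sum_power_ge:
  fixes M :: nat and eta sigma2 d DL R x xstar eps :: real and xs ys P :: "nat \<Rightarrow> real"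
  defines "xstar \<equiv> (\<Sum>m=1..M. xs m) / M"
    and "eps \<equiv> sigma2 / eta * (exp (real M * R) - 1)"
  assumes "M \<ge> 1" "eta > 0" "sigma2 > 0" "d > 0" "R \<ge> 0"
    and "feasible M eta sigma2 d DL R xs ys P x"
  shows "(\<Sum>m=1..M. min_power M eta sigma2 R xstar (xs m) (ys m) d) + eps * M * (x - xstar)^2
    \<le> (\<Sum>m=1..M. P m)"
proof -
  have "(\<Sum>m=1..M. min_power M eta sigma2 R xstar (xs m) (ys m) d) + eps * M * (x - xstar)^2
      = (\<Sum>m=1..M. min_power M eta sigma2 R x (xs m) (ys m) d)"
    unfolding xstar_def eps_def by (rule sum_min_power_eq[symmetric])
  also have "\<dots> \<le> (\<Sum>m=1..M. P m)"
    using assms(3-) by (intro sum_mono) (simp add: feasible_iff_min_power_le)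
  finally show ?thesis .
qed

theorem corollary1:
  fixes M :: nat and eta sigma2 d DL DW R :: real and xs ys :: "nat \<Rightarrow> real"
  assumes "M \<ge> 1" and "eta > 0" and "sigma2 > 0" and "d > 0" and "R > 0"
    and "\<forall>m\<in>{1..M}. - DL / 2 \<le> xs m \<and> xs m \<le> DL / 2"
    and "\<forall>m\<in>{1..M}. - DW / 2 \<le> ys m \<and> ys m \<le> DW / 2"
  defines "xstar \<equiv> (1 / real M) * (\<Sum>m=1..M. xs m)"
    and "eps \<equiv> sigma2 / eta * (exp (real M * R) - 1)"
  defines "Pstar \<equiv> (\<lambda>m. eps * (xstar - xs m)^2 + eps * ((ys m)^2 + d^2))"
  shows "feasible M eta sigma2 d DL R xs ys Pstar xstar
       \<and> (\<forall>P x. feasible M eta sigma2 d DL R xs ys P x \<longrightarrow>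
              (\<Sum>m=1..M. Pstar m) \<le> (\<Sum>m=1..M. P m))
       \<and> (\<forall>P x. feasible M eta sigma2 d DL R xs ys P x \<and>
              (\<Sum>m=1..M. P m) = (\<Sum>m=1..M. Pstar m) \<longrightarrow>
              x = xstar \<and> (\<forall>m\<in>{1..M}. P m = Pstar m))"
proof -
  note feasible_iff = feasible_iff_min_power_le[OF assms(1-4) less_imp_le[OF \<open>R > 0\<close>]]
  have "eps > 0"
    using assms(1-3,5) by (simp add: eps_def)
  have xstar_eq: "xstar = (\<Sum>m=1..M. xs m) / M"
    by (simp add: xstar_def)
  have Pstar_eq: "Pstar m = min_power M eta sigma2 R xstar (xs m) (ys m) d" for m
    by (simp add: Pstar_def min_power_def eps_def algebra_simps)
  have sum_Pstar_le: "(\<Sum>m=1..M. Pstar m) + eps * M * (x - xstar)^2 \<le> (\<Sum>m=1..M. P m)"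
    if "feasible M eta sigma2 d DL R xs ys P x" for P x
    using feasible_sum_power_ge[OF assms(1-4) less_imp_le[OF \<open>R > 0\<close>] that]
    by (simp add: Pstar_eq xstar_eq eps_def)
  have optimal_location: "x = xstar"
    if "feasible M eta sigma2 d DL R xs ys P x" "(\<Sum>m=1..M. P m) = (\<Sum>m=1..M. Pstar m)" for P x
    using sum_Pstar_le[OF that(1)] that(2) \<open>eps > 0\<close> assms(1) by (simp add: mult_le_0_iff)
  show ?thesis
  proof (intro conjI allI impI)
    have "- DL / 2 \<le> xstar \<and> xstar \<le> DL / 2"
      using mean_between_bounds[of "{1..M}" "- DL / 2" xs "DL / 2"] assms(1,6)
      by (simp add: xstar_eq)
    then show "feasible M eta sigma2 d DL R xs ys Pstar xstar"
      by (simp add: feasible_iff Pstar_eq)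
  next
    fix P x
    assume "feasible M eta sigma2 d DL R xs ys P x"
    moreover have "0 \<le> eps * M * (x - xstar)^2"
      using \<open>eps > 0\<close> by simp
    ultimately show "(\<Sum>m=1..M. Pstar m) \<le> (\<Sum>m=1..M. P m)"
      using sum_Pstar_le by fastforce
  next
    fix P x
    assume "feasible M eta sigma2 d DL R xs ys P x \<and> (\<Sum>m=1..M. P m) = (\<Sum>m=1..M. Pstar m)"
    then show "x = xstar" using optimal_location by blast
  next
    fix P x
    assume opt: "feasible M eta sigma2 d DL R xs ys P x \<and> (\<Sum>m=1..M. P m) = (\<Sum>m=1..M. Pstar m)"
    then have "\<forall>m\<in>{1..M}. Pstar m \<le> P m"
      using optimal_location by (auto simp: feasible_iff Pstar_eq)
    then show "\<forall>m\<in>{1..M}. P m = Pstar m"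
      using opt sum_mono_inv[of Pstar "{1..M}" P] by auto
  qed
qed

end
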